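(* Assume $\chi$ is weakly generic and let $\sigma=\sigma_{a,b}$ be a Serre weight, $r_\tau=a_\tau-b_\tau+1$. Let $s,t\in\mathbf{Z}_{\ge0}^\Sigma$ satisfy, for each $\tau$, $s_\tau+t_\tau=a_\tau-b_\tau+e$ and ($s_\tau\ge r_\tau$ or $t_\tau\ge r_\tau$), and $\chi_1|_{I_K}=\prod_\tau\omega_\tau^{s_\tau}$, $\chi_2|_{I_K}=\prod_\tau\omega_\tau^{t_\tau}$. Define $J=\{\tau\in\Sigma: t_\tau\le e-1\}$ and $x_\tau=s_\tau$ if $\tau\notin J$, $x_\tau=s_\tau-r_\tau$ if $\tau\in J$. Suppose $(J,x)$ is the maximal element of $\mathcal{S}(\chi_1,\chi_2,\sigma)$. Then $J=\{\tau\in\Sigma: t_\tau<r_\tau\}$.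
   Context: Let $p$ be a prime, $K/\mathbf{Q}_p$ finite with residue field $k$, residue degree $f$, ramification index $e$; $I_K$ inertia. Fix $\varpi\in\overline{K}$ with $\varpi^{p^f-1}$ a uniformiser; $\omega\colon G_K\to k^\times$ sends $g$ to the reduction of $g(\varpi)/\varpi$. $\Sigma=\mathrm{Hom}_{\mathbf{F}_p}(k,\overline{\mathbf{F}}_p)$, $\varphi(x)=x^p$, $\omega_\tau=\tau\circ\omega$, $\Omega_{\tau,a}=\sum_{i=0}^{f-1}p^ia_{\tau\circ\varphi^i}$ for $a\in\mathbf{Z}^\Sigma$. $\chi_1,\chi_2\colon G_K\to\overline{\mathbf{F}}_p^\times$ continuous characters, $\chi=\chi_1\chi_2^{-1}=\psi\prod_\tau\omega_\tau^{n_\tau}$, $\psi$ unramified, $n_\tau\in[1,p]$, some $n_\tau<p$. Weakly generic: $n_\tau\in[e,p-e]$ for all $\tau$. Serre weight $\sigma_{a,b}=\bigotimes_\tau(\det^{b_\tau}\otimes\mathrm{Sym}^{a_\tau-b_\tau}k^2)\otimes_{k,\tau}\overline{\mathbf{F}}_p$, $a_\tau-b_\tau\in[0,p-1]$. $\mathcal{S}(\chi_1,\chi_2,\sigma)$: pairs $(J,x)$, $J\subseteq\Sigma$, $x\in\mathbf{Z}^\Sigma$, $x_\tau\in[0,e-1]$, with $\chi_1|_{I_K}=\prod_{\tau\in J}\omega_\tau^{a_\tau+1+x_\tau}\prod_{\tau\notin J}\omega_\tau^{b_\tau+x_\tau}$ and $\chi_2|_{I_K}=\prod_{\tau\notin J}\omega_\tau^{a_\tau+e-x_\tau}\prod_{\tau\in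 J}\omega_\tau^{b_\tau+e-1-x_\tau}$. With $s(J,x)_\tau=a_\tau-b_\tau+1+x_\tau$ for $\tau\in J$ and $x_\tau$ for $\tau\notin J$, the order is $(J,x)\preceq(J',x')$ iff $\Omega_{\tau,s(J',x')-s(J,x)}\in(p^f-1)\mathbf{Z}_{\ge0}$ for all $\tau$; a non-empty $\mathcal{S}$ has a unique maximal element. *)

theory Defs
  imports "HOL-Number_Theory.Cong"
begin

text \<open>Sigma = Hom(k, Fpbar) is indexed by {0..<f}: tau_i = tau_0 o phi^i, so that
  tau_i o phi = tau_{(i+1) mod f}. A function Sigma -> Z is a function nat => int (only values
  below f matter). The restriction to inertia of any continuous character G_K -> Fpbar^* is a power
  of omega_{tau_0} (which has order p^f - 1 on inertia), so such a restriction is recorded by an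
  integer exponent c modulo p^f - 1; since omega_{tau_i} = omega_{tau_0}^(p^i), the character
  prod_tau omega_tau^(v_tau) has exponent Omega_{tau_0, v}.\<close>

definition Omega :: "nat \<Rightarrow> nat \<Rightarrow> nat \<Rightarrow> (nat \<Rightarrow> int) \<Rightarrow> int" where
  "Omega p f \<tau> v = (\<Sum>i<f. int p ^ i * v ((\<tau> + i) mod f))"

definition restr_is :: "nat \<Rightarrow> nat \<Rightarrow> int \<Rightarrow> (nat \<Rightarrow> int) \<Rightarrow> bool" where
  "restr_is p f c v \<longleftrightarrow> [c = Omega p f 0 v] (mod (int p ^ f - 1))"

text \<open>chi = chi1 chi2^{-1} = psi prod omega_tau^(n_tau), psi unramified, n_tau in [1,p], some
  n_tau < p, and weakly generic: all n_tau in [e, p-e].\<close>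
definition weakly_generic :: "nat \<Rightarrow> nat \<Rightarrow> nat \<Rightarrow> int \<Rightarrow> int \<Rightarrow> bool" where
  "weakly_generic p e f c1 c2 \<longleftrightarrow>
     (\<exists>n::nat \<Rightarrow> int. (\<forall>i<f. 1 \<le> n i \<and> n i \<le> int p) \<and> (\<exists>i<f. n i < int p)
        \<and> restr_is p f (c1 - c2) n
        \<and> (\<forall>i<f. int e \<le> n i \<and> n i \<le> int p - int e))"

definition serre_weight :: "nat \<Rightarrow> nat \<Rightarrow> (nat \<Rightarrow> int) \<Rightarrow> (nat \<Rightarrow> int) \<Rightarrow> bool" where
  "serre_weight p f a b \<longleftrightarrow> (\<forall>i<f. 0 \<le> a i - b i \<and> a i - b i \<le> int p - 1)"

definition S_set :: "nat \<Rightarrow> nat \<Rightarrow> nat \<Rightarrow> int \<Rightarrow> int \<Rightarrow> (nat \<Rightarrow> int) \<Rightarrow> (nat \<Rightarrow> int)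
    \<Rightarrow> (nat set \<times> (nat \<Rightarrow> int)) set" where
  "S_set p e f c1 c2 a b = {(J, x). J \<subseteq> {..<f}
      \<and> (\<forall>i<f. 0 \<le> x i \<and> x i \<le> int e - 1) \<and> (\<forall>i\<ge>f. x i = 0)
      \<and> restr_is p f c1 (\<lambda>i. if i \<in> J then a i + 1 + x i else b i + x i)
      \<and> restr_is p f c2 (\<lambda>i. if i \<notin> J then a i + int e - x i else b i + int e - 1 - x i)}"

definition sfun :: "(nat \<Rightarrow> int) \<Rightarrow> (nat \<Rightarrow> int) \<Rightarrow> nat set \<Rightarrow> (nat \<Rightarrow> int) \<Rightarrow> nat \<Rightarrow> int" where
  "sfun a b J x \<tau> = (if \<tau> \<in> J then a \<tau> - b \<tau> + 1 + x \<tau> else x \<tau>)"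

definition S_le :: "nat \<Rightarrow> nat \<Rightarrow> (nat \<Rightarrow> int) \<Rightarrow> (nat \<Rightarrow> int)
    \<Rightarrow> nat set \<times> (nat \<Rightarrow> int) \<Rightarrow> nat set \<times> (nat \<Rightarrow> int) \<Rightarrow> bool" where
  "S_le p f a b Jx Jx' \<longleftrightarrow> (\<forall>\<tau><f. \<exists>m::int. m \<ge> 0 \<and>
      Omega p f \<tau> (\<lambda>i. sfun a b (fst Jx') (snd Jx') i - sfun a b (fst Jx) (snd Jx) i)
        = (int p ^ f - 1) * m)"

end

(* Suppose tau lies in J although t_tau >= r_tau. Weak genericity gives n with
   y = n - s + t satisfying p^f - 1 | Omega_tau(y), with digits y_i in [1 - p, 2p - 1] and
   y_tau in [2, p - 2]. Bounding the quotient Omega_tau(y) / (p^f - 1) and reducing modulo p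
   forces the quotient to be 2, and then the digit of the cyclic predecessor q of tau is at
   least 2p - 2; hence s_q = 0 and r_q >= p - 1, so q lies outside J. Moving tau out of J and
   q into J is a carry of p from q to tau: the s-vector changes by -1 at tau and +p at q, which
   leaves both characters unchanged but raises Omega_tau by p^f - 1. The resulting pair lies
   in S and is not below (J, x), contradicting maximality. *)
theory Submission
  imports Defs
begin

lemma Omega_cong:
  assumes "\<And>i. i < f \<Longrightarrow> v i = w i"
  shows "Omega p f \<tau> v = Omega p f \<tau> w"
  unfolding Omega_def using assms by (intro sum.cong) auto

lemma Omega_add: "Omega p f \<tau> (\<lambda>i. v i + w i) = Omega p f \<tau> v + Omega p f \<tau> w"
  unfolding Omega_def by (simp add: algebra_simps sum.distrib)

lemma Omega_minus: "Omega p f \<tau> (\<lambda>i. - v i) = - Omega p f \<tau> v"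
  unfolding Omega_def by (simp add: sum_negf)

lemma Omega_diff: "Omega p f \<tau> (\<lambda>i. v i - w i) = Omega p f \<tau> v - Omega p f \<tau> w"
  using Omega_add[of p f \<tau> v "\<lambda>i. - w i"] by (simp add: Omega_minus)

lemma add_mod_left_cancel_less:
  fixes f i j :: nat
  assumes "i < f" and "j < f"
  shows "(\<tau> + i) mod f = (\<tau> + j) mod f \<longleftrightarrow> i = j"
  using assms cong_less_modulus_unique_nat cong_add_lcancel_nat unfolding cong_def by metis

lemma Omega_delta:
  assumes "j < f"
  shows "Omega p f \<tau> (\<lambda>i. if i = (\<tau> + j) mod f then c else 0) = int p ^ j * c"
proof -
  have "Omega p f \<tau> (\<lambda>i. if i = (\<tau> + j) mod f then c else 0)
      = (\<Sum>i<f. if i = j then int p ^ i * c else 0)"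
    unfolding Omega_def using assms by (intro sum.cong) (auto simp: add_mod_left_cancel_less)
  then show ?thesis using assms by simp
qed

lemma Omega_Suc:
  assumes "f \<ge> 1"
  shows "int p * Omega p f (Suc \<tau>) v = Omega p f \<tau> v + (int p ^ f - 1) * v (\<tau> mod f)"
proof -
  define g where "g i = v ((\<tau> + i) mod f)" for i
  have Omega_g: "Omega p f \<tau> v = (\<Sum>i<f. int p ^ i * g i)"
    unfolding Omega_def g_def ..
  have g_f: "g f = v (\<tau> mod f)" "g 0 = v (\<tau> mod f)" unfolding g_def by simp_all
  have "int p * Omega p f (Suc \<tau>) v = (\<Sum>i<f. int p ^ Suc i * g (Suc i))"
    unfolding Omega_def g_def by (simp add: sum_distrib_left mult.assoc)
  also have "\<dots> = (\<Sum>i<Suc f. int p ^ i * g i) - g 0"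
    by (simp only: sum.lessThan_Suc_shift) simp
  also have "\<dots> = Omega p f \<tau> v + (int p ^ f - 1) * v (\<tau> mod f)"
    by (simp add: Omega_g g_f algebra_simps)
  finally show ?thesis .
qed

lemma Omega_dvd_iff:
  assumes "f \<ge> 1"
  shows "(int p ^ f - 1) dvd Omega p f \<tau> v \<longleftrightarrow> (int p ^ f - 1) dvd Omega p f 0 v"
proof (induction \<tau>)
  case (Suc \<tau>)
  have "coprime (int p) (int p ^ f - 1)"
    using coprime_doff_one_right[of "int p ^ f"] coprime_power_left_iff assms
    by (metis not_one_le_zero)
  then have "(int p ^ f - 1) dvd Omega p f (Suc \<tau>) v
      \<longleftrightarrow> (int p ^ f - 1) dvd int p * Omega p f (Suc \<tau>) v"
    by (simp add: coprime_dvd_mult_right_iff coprime_commute)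
  then show ?case using Suc by (simp add: Omega_Suc[OF assms] dvd_add_left_iff)
qed simp

lemma digit_sum_le:
  fixes p c :: int
  assumes "p \<ge> 1" and "\<And>i. i < k \<Longrightarrow> w i \<le> c"
  shows "(p - 1) * (\<Sum>i<k. p ^ i * w i) \<le> c * (p ^ k - 1)"
proof -
  have "(p - 1) * (\<Sum>i<k. p ^ i * w i) \<le> (p - 1) * (\<Sum>i<k. p ^ i * c)"
    using assms by (intro sum_mono mult_left_mono) auto
  also have "\<dots> = c * ((p - 1) * (\<Sum>i<k. p ^ i))"
    by (simp add: sum_distrib_left mult.commute mult.left_commute)
  finally show ?thesis by (simp add: power_diff_1_eq)
qed

lemma digit_sum_ge:
  fixes p c :: int
  assumes "p \<ge> 1" and "\<And>i. i < k \<Longrightarrow> c \<le> w i"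
  shows "c * (p ^ k - 1) \<le> (p - 1) * (\<Sum>i<k. p ^ i * w i)"
  using digit_sum_le[of p k "\<lambda>i. - w i" "- c"] assms by (simp add: sum_negf)

lemma top_digit_ge_if_digit_sum_eq:
  fixes p :: int
  assumes p: "p \<ge> 2" and w: "\<And>i. i < k \<Longrightarrow> w i \<le> 2 * p - 1"
    and sum: "(\<Sum>i<k. p ^ i * w i) = 2 * p ^ k - 1"
  shows "k \<ge> 1 \<and> w (k - 1) \<ge> 2 * p - 2"
proof (cases k)
  case 0
  then show ?thesis using sum by simp
next
  case (Suc g)
  define low where "low = (\<Sum>i<g. p ^ i * w i)"
  have low_le: "(p - 1) * low \<le> (2 * p - 1) * (p ^ g - 1)"
    unfolding low_def using p w Suc by (intro digit_sum_le) auto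
  have split: "low + p ^ g * w g = 2 * p ^ Suc g - 1"
    using sum Suc by (simp add: low_def)
  have "w g \<ge> 2 * p - 2"
  proof (rule ccontr)
    assume "\<not> w g \<ge> 2 * p - 2"
    then have "(p - 1) * (p ^ g * w g) \<le> (p - 1) * (p ^ g * (2 * p - 3))"
      using p by (intro mult_left_mono) auto
    then have "(p - 1) * (2 * p ^ Suc g - 1)
        \<le> (2 * p - 1) * (p ^ g - 1) + (p - 1) * (p ^ g * (2 * p - 3))"
      using low_le split[symmetric] by (simp add: distrib_left)
    moreover have "(p - 1) * (2 * p ^ Suc g - 1)
        = (2 * p - 1) * (p ^ g - 1) + (p - 1) * (p ^ g * (2 * p - 3)) + p ^ g * (p - 2) + p"
      by (simp add: algebra_simps)
    moreover have "p ^ g * (p - 2) \<ge> 0" using p by simp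
    ultimately show False using p by linarith
  qed
  then show ?thesis using Suc by simp
qed

lemma digit_sum_eq_if_dvd:
  fixes p d :: int
  assumes p: "p \<ge> 2" and w: "\<And>i. i < k \<Longrightarrow> 1 - p \<le> w i \<and> w i \<le> 2 * p - 1"
    and d: "2 \<le> d" "d \<le> p - 2"
    and dvd: "(p * p ^ k - 1) dvd (d + p * (\<Sum>i<k. p ^ i * w i))"
  shows "(\<Sum>i<k. p ^ i * w i) = 2 * p ^ k - 1"
proof -
  define R where "R = (\<Sum>i<k. p ^ i * w i)"
  define P where "P = p ^ k"
  have P: "P \<ge> 1" unfolding P_def using p by simp
  have "p * P \<ge> 2 * 1" using p P by (intro mult_mono) auto
  then have M: "p * P - 1 > 0" by simp
  have R_le: "(p - 1) * R \<le> (2 * p - 1) * (P - 1)"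
    unfolding R_def P_def using p w by (intro digit_sum_le) auto
  have "(1 - p) * (P - 1) \<le> (p - 1) * R"
    unfolding R_def P_def using p w by (intro digit_sum_ge) auto
  then have "(p - 1) * (R + P - 1) \<ge> 0" by (simp add: algebra_simps)
  then have R_ge: "R \<ge> 1 - P" using p by (simp add: zero_le_mult_iff)
  obtain m where m: "d + p * R = (p * P - 1) * m"
    using dvd unfolding R_def P_def by (auto elim: dvdE)
  have "(p * P - 1) * (m + 1) > 0"
  proof -
    have "p * R \<ge> p * (1 - P)" using R_ge p by (intro mult_left_mono) auto
    then show ?thesis using m d by (simp add: algebra_simps)
  qed
  then have m_ge: "m \<ge> 0" using M by (simp add: zero_less_mult_iff)
  have "(p - 1) * ((p * P - 1) * (3 - m)) > 0"
  proof -
    have "(p - 1) * d \<le> (p - 1) * (p - 2)" using d p by (intro mult_left_mono) auto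
    moreover have "p * ((p - 1) * R) \<le> p * ((2 * p - 1) * (P - 1))"
      using R_le p by (intro mult_left_mono) auto
    moreover have "(p - 1) * ((p * P - 1) * (3 - m))
        = (p - 1) * (3 * (p * P - 1)) - (p - 1) * ((p * P - 1) * m)"
      by (simp add: algebra_simps)
    moreover have "(p - 1) * ((p * P - 1) * m) = (p - 1) * d + p * ((p - 1) * R)"
      unfolding m[symmetric] by (simp add: algebra_simps)
    moreover have "(p - 1) * (3 * (p * P - 1))
        = (p - 1) * (p - 2) + p * ((2 * p - 1) * (P - 1)) + p * P * (p - 2) + p * (p - 1) + 1"
      by (simp add: algebra_simps)
    moreover have "p * P * (p - 2) \<ge> 0" "p * (p - 1) \<ge> 0" using p P by simp_all
    ultimately show ?thesis by linarith
  qed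
  then have m_le: "m \<le> 2" using M p by (simp add: zero_less_mult_iff)
  have "d + m = p * (P * m - R)" using m by (simp add: algebra_simps)
  then have "p \<le> d + m" using d m_ge by (intro zdvd_imp_le) auto
  then have "m = 2" "d = p - 2" using d m_le by auto
  then have "p * R = p * (2 * P - 1)" using m by (simp add: algebra_simps)
  then show ?thesis using p unfolding R_def P_def by simp
qed

lemma top_digit_ge_if_dvd:
  fixes p :: int
  assumes p: "p \<ge> 2" and f: "f \<ge> 1"
    and z: "\<And>i. i < f \<Longrightarrow> 1 - p \<le> z i \<and> z i \<le> 2 * p - 1"
    and z0: "2 \<le> z 0" "z 0 \<le> p - 2"
    and dvd: "(p ^ f - 1) dvd (\<Sum>i<f. p ^ i * z i)"
  shows "f \<ge> 2 \<and> z (f - 1) \<ge> 2 * p - 2"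
proof -
  obtain k where k: "f = Suc k" using f by (cases f) auto
  have "(\<Sum>i<f. p ^ i * z i) = z 0 + p * (\<Sum>i<k. p ^ i * z (Suc i))"
    unfolding k sum.lessThan_Suc_shift by (simp add: sum_distrib_left mult.assoc)
  then have "(\<Sum>i<k. p ^ i * z (Suc i)) = 2 * p ^ k - 1"
    using dvd p z z0 k by (intro digit_sum_eq_if_dvd) auto
  then have "k \<ge> 1 \<and> z (Suc (k - 1)) \<ge> 2 * p - 2"
    using top_digit_ge_if_digit_sum_eq[of p k "\<lambda>i. z (Suc i)"] p z k by auto
  then show ?thesis using k by auto
qed

lemma Omega_dvd_pred_digit_ge:
  assumes "p \<ge> 2" and "\<tau> < f"
    and "\<And>i. i < f \<Longrightarrow> 1 - int p \<le> y i \<and> y i \<le> 2 * int p - 1"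
    and "2 \<le> y \<tau>" and "y \<tau> \<le> int p - 2"
    and "(int p ^ f - 1) dvd Omega p f \<tau> y"
  shows "f \<ge> 2 \<and> y ((\<tau> + (f - 1)) mod f) \<ge> 2 * int p - 2"
  using top_digit_ge_if_dvd[of "int p" f "\<lambda>i. y ((\<tau> + i) mod f)"] assms
  unfolding Omega_def by simp

lemma restr_is_shift:
  assumes "(int p ^ f - 1) dvd Omega p f 0 D" and "\<And>i. i < f \<Longrightarrow> w i = v i + D i"
  shows "restr_is p f c w \<longleftrightarrow> restr_is p f c v"
proof -
  have "Omega p f 0 w = Omega p f 0 v + Omega p f 0 D"
    using assms(2) by (simp add: Omega_cong[of f w] Omega_add)
  then show ?thesis
    using assms(1) unfolding restr_is_def
    by (metis cong_0_iff cong_add_lcancel_0 cong_sym cong_trans)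
qed

lemma S_set_iff_sfun:
  "(J, x) \<in> S_set p e f c1 c2 a b \<longleftrightarrow> J \<subseteq> {..<f}
      \<and> (\<forall>i<f. 0 \<le> x i \<and> x i \<le> int e - 1) \<and> (\<forall>i\<ge>f. x i = 0)
      \<and> restr_is p f c1 (\<lambda>i. b i + sfun a b J x i)
      \<and> restr_is p f c2 (\<lambda>i. a i + int e - sfun a b J x i)"
proof -
  have "(\<lambda>i. if i \<in> J then a i + 1 + x i else b i + x i) = (\<lambda>i. b i + sfun a b J x i)"
    "(\<lambda>i. if i \<notin> J then a i + int e - x i else b i + int e - 1 - x i)
      = (\<lambda>i. a i + int e - sfun a b J x i)"
    by (auto simp: sfun_def)
  then show ?thesis unfolding S_set_def by simp
qed

lemma weakly_generic_dvd_Omega: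
  assumes "weakly_generic p e f c1 c2" and "restr_is p f c1 s" and "restr_is p f c2 t"
  obtains n where "\<And>i. i < f \<Longrightarrow> int e \<le> n i \<and> n i \<le> int p - int e"
    and "(int p ^ f - 1) dvd Omega p f 0 (\<lambda>i. n i - s i + t i)"
proof -
  obtain n where n: "\<And>i. i < f \<Longrightarrow> int e \<le> n i \<and> n i \<le> int p - int e"
    and "restr_is p f (c1 - c2) n"
    using assms(1) unfolding weakly_generic_def by auto
  then have "[(c1 - c2) - c1 + c2 = Omega p f 0 n - Omega p f 0 s + Omega p f 0 t] (mod int p ^ f - 1)"
    using assms(2,3) unfolding restr_is_def by (intro cong_add cong_diff)
  then have "(int p ^ f - 1) dvd Omega p f 0 (\<lambda>i. n i - s i + t i)"
    by (simp add: Omega_add Omega_diff cong_0_iff[symmetric] cong_sym_eq)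
  with n show thesis by (rule that)
qed

lemma S_set_carry_not_maximal:
  assumes S: "(J, x) \<in> S_set p e f c1 c2 a b" and p: "p \<ge> 2" and f: "f \<ge> 2"
    and \<tau>: "\<tau> \<in> J" and q: "q = (\<tau> + (f - 1)) mod f" "q \<notin> J" "x q = 0"
    and r_q: "int p - int e \<le> a q - b q" "a q - b q \<le> int p - 1"
    and x_\<tau>: "0 \<le> a \<tau> - b \<tau> + x \<tau>" "a \<tau> - b \<tau> + x \<tau> \<le> int e - 1"
  shows "\<exists>y \<in> S_set p e f c1 c2 a b. \<not> S_le p f a b y (J, x)"
proof -
  let ?M = "int p ^ f - 1"
  have J: "J \<subseteq> {..<f}" and x: "\<forall>i<f. 0 \<le> x i \<and> x i \<le> int e - 1" "\<forall>i\<ge>f. x i = 0"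
    and c1: "restr_is p f c1 (\<lambda>i. b i + sfun a b J x i)"
    and c2: "restr_is p f c2 (\<lambda>i. a i + int e - sfun a b J x i)"
    using S unfolding S_set_iff_sfun by auto
  have \<tau>_f: "\<tau> < f" and q_f: "q < f" using \<tau> J q f by auto
  have \<tau>_eq: "\<tau> = (\<tau> + 0) mod f" using \<tau>_f by simp
  have q_\<tau>: "q \<noteq> \<tau>" using add_mod_left_cancel_less[of "f - 1" f 0 \<tau>] q(1) \<tau>_eq f by simp
  define J' where "J' = insert q (J - {\<tau>})"
  define x' where "x' = x(\<tau> := a \<tau> - b \<tau> + x \<tau>, q := int p - (a q - b q + 1))"
  define D where "D i = (if i = q then int p else 0) + (if i = \<tau> then -1 else 0)" for i
  have sfun': "sfun a b J' x' i = sfun a b J x i + D i" for i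
    using \<tau> q q_\<tau> by (auto simp: sfun_def J'_def x'_def D_def)
  have "Omega p f \<tau> (\<lambda>i. if i = q then int p else 0) = int p ^ (f - 1) * int p"
    unfolding q(1) using f by (intro Omega_delta) simp
  moreover have "Omega p f \<tau> (\<lambda>i. if i = \<tau> then -1 else 0) = -1"
    using Omega_delta[of 0 f p \<tau> "-1"] \<tau>_f by simp
  ultimately have "Omega p f \<tau> D = int p ^ (f - 1) * int p - 1"
    unfolding D_def Omega_add by simp
  also have "\<dots> = ?M" using f by (simp add: power_eq_if)
  finally have Omega_D: "Omega p f \<tau> D = ?M" .
  then have D_dvd: "?M dvd Omega p f 0 D"
    using Omega_dvd_iff[of f p \<tau> D] f by simp
  then have "?M dvd Omega p f 0 (\<lambda>i. - D i)" by (simp add: Omega_minus)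
  then have "restr_is p f c2 (\<lambda>i. a i + int e - sfun a b J' x' i)
      \<longleftrightarrow> restr_is p f c2 (\<lambda>i. a i + int e - sfun a b J x i)"
    by (rule restr_is_shift) (simp add: sfun')
  moreover have "restr_is p f c1 (\<lambda>i. b i + sfun a b J' x' i)
      \<longleftrightarrow> restr_is p f c1 (\<lambda>i. b i + sfun a b J x i)"
    using D_dvd by (rule restr_is_shift) (simp add: sfun')
  ultimately have "restr_is p f c1 (\<lambda>i. b i + sfun a b J' x' i)"
    "restr_is p f c2 (\<lambda>i. a i + int e - sfun a b J' x' i)"
    using c1 c2 by simp_all
  moreover have "J' \<subseteq> {..<f}" using J q_f by (auto simp: J'_def)
  moreover have "\<forall>i<f. 0 \<le> x' i \<and> x' i \<le> int e - 1" "\<forall>i\<ge>f. x' i = 0"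
    using x x_\<tau> r_q \<tau>_f q_f by (auto simp: x'_def)
  ultimately have mem: "(J', x') \<in> S_set p e f c1 c2 a b" unfolding S_set_iff_sfun by blast
  have "\<not> S_le p f a b (J', x') (J, x)"
  proof
    assume "S_le p f a b (J', x') (J, x)"
    then obtain m where m: "m \<ge> 0"
      "Omega p f \<tau> (\<lambda>i. sfun a b J x i - sfun a b J' x' i) = ?M * m"
      using \<tau>_f unfolding S_le_def by auto
    moreover have "Omega p f \<tau> (\<lambda>i. sfun a b J x i - sfun a b J' x' i) = - ?M"
      by (simp add: sfun' Omega_minus Omega_D)
    ultimately have "?M * m + ?M * 1 = 0" by simp
    then have "?M * (m + 1) = 0" by (simp only: distrib_left)
    moreover have "?M > 0" using p f one_less_power[of "int p" f] by simp
    ultimately show False using \<open>m \<ge> 0\<close> by simp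
  qed
  then show ?thesis using mem by blast
qed

theorem lemma5p9:
  fixes p e f :: nat and c1 c2 :: int and a b s t :: "nat \<Rightarrow> int"
    and J :: "nat set" and x :: "nat \<Rightarrow> int"
  assumes "prime p" and "f \<ge> 1" and "e \<ge> 1"
    and "weakly_generic p e f c1 c2"
    and "serre_weight p f a b"
    and "\<forall>\<tau><f. s \<tau> \<ge> 0 \<and> t \<tau> \<ge> 0"
    and "\<forall>\<tau><f. s \<tau> + t \<tau> = a \<tau> - b \<tau> + int e"
    and "\<forall>\<tau><f. s \<tau> \<ge> a \<tau> - b \<tau> + 1 \<or> t \<tau> \<ge> a \<tau> - b \<tau> + 1"
    and "restr_is p f c1 s" and "restr_is p f c2 t"
    and "J = {\<tau>. \<tau> < f \<and> t \<tau> \<le> int e - 1}"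
    and "x = (\<lambda>\<tau>. if \<tau> < f then (if \<tau> \<in> J then s \<tau> - (a \<tau> - b \<tau> + 1) else s \<tau>) else 0)"
    and "(J, x) \<in> S_set p e f c1 c2 a b"
    and "\<forall>y \<in> S_set p e f c1 c2 a b. S_le p f a b y (J, x)"
  shows "J = {\<tau>. \<tau> < f \<and> t \<tau> < a \<tau> - b \<tau> + 1}"
proof
  show "{\<tau>. \<tau> < f \<and> t \<tau> < a \<tau> - b \<tau> + 1} \<subseteq> J"
    using assms(7,8,11) by force
next
  have p: "p \<ge> 2" using assms(1) by (rule prime_ge_2_nat)
  have r: "\<And>i. i < f \<Longrightarrow> 0 \<le> a i - b i \<and> a i - b i \<le> int p - 1"
    using assms(5) unfolding serre_weight_def by auto
  show "J \<subseteq> {\<tau>. \<tau> < f \<and> t \<tau> < a \<tau> - b \<tau> + 1}"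
  proof (rule subsetI, rule ccontr)
    fix \<tau> assume "\<tau> \<in> J" and "\<tau> \<notin> {\<tau>. \<tau> < f \<and> t \<tau> < a \<tau> - b \<tau> + 1}"
    then have \<tau>: "\<tau> < f" "a \<tau> - b \<tau> + 1 \<le> t \<tau>" "t \<tau> \<le> int e - 1" using assms(11) by auto
    obtain n where n: "\<And>i. i < f \<Longrightarrow> int e \<le> n i \<and> n i \<le> int p - int e"
      and "(int p ^ f - 1) dvd Omega p f 0 (\<lambda>i. n i - s i + t i)"
      using weakly_generic_dvd_Omega[OF assms(4,9,10)] by blast
    then have "(int p ^ f - 1) dvd Omega p f \<tau> (\<lambda>i. n i - s i + t i)"
      using Omega_dvd_iff assms(2) by blast
    moreover have "1 - int p \<le> n i - s i + t i \<and> n i - s i + t i \<le> 2 * int p - 1" if "i < f" for i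
      using that n r assms(6,7) by force
    moreover have "2 \<le> n \<tau> - s \<tau> + t \<tau>" "n \<tau> - s \<tau> + t \<tau> \<le> int p - 2"
      using \<tau> n r assms(7) by force+
    moreover define q where "q = (\<tau> + (f - 1)) mod f"
    ultimately have f: "f \<ge> 2" and pred_digit: "n q - s q + t q \<ge> 2 * int p - 2"
      using Omega_dvd_pred_digit_ge[OF p \<tau>(1), of "\<lambda>i. n i - s i + t i"] by auto
    have q: "q < f" using assms(2) unfolding q_def by simp
    with pred_digit have "s q = 0" "int p - 2 \<le> a q - b q"
      using n r assms(6,7) by force+
    with q have "q \<notin> J" "x q = 0" "int p - int e \<le> a q - b q"
      using r p \<tau> assms(7,11,12) by force+
    moreover have "0 \<le> a \<tau> - b \<tau> + x \<tau>" "a \<tau> - b \<tau> + x \<tau> \<le> int e - 1"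
      using \<tau> \<open>\<tau> \<in> J\<close> r assms(7,12) by force+
    ultimately obtain y where "y \<in> S_set p e f c1 c2 a b" "\<not> S_le p f a b y (J, x)"
      using S_set_carry_not_maximal[OF assms(13) p f \<open>\<tau> \<in> J\<close> q_def] r q by blast
    then show False using assms(14) by blast
  qed
qed

end
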